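(* Let $\mathcal{V}\subseteq\mathbb{R}^D$ be compact, $u\in\mathcal{U}$ fixed, and suppose $f(u,\cdot)$ is continuous and $l$-Lipschitz on $\mathcal{V}$ ($l>0$). Assume $R(u)$ and $S(u)$ are both finite. Let $\zeta=\phi(u)-\max_{v\in S(u)\setminus R(u)}f(u,v)$ (with $\zeta=\infty$ if $S(u)=R(u)$). Let $\epsilon\ge0$ with $\epsilon<\zeta$, let $A\subseteq\mathcal{V}$ be finite, and let $\delta\ge0$ with $\delta<\tfrac12(\zeta-\epsilon)/l$. If $d_H(R(u),A)\le\delta$ and $d_H(A,S(u))\le\delta$, then for each $v'\in R^\epsilon_A(u)$ there is $v\in R(u)$ with $\|v-v'\|\le\delta$.
   Context: Definitions: $\phi(u)=\max_{v\in\mathcal{V}} f(u,v)$, $R(u)=\{v\in\mathcal{V}: f(u,v)=\phi(u)\}$. $S(u)$ is the set of local maximum points of $f(u,\cdot)$: $S(u)=\{v_0\in\mathcal{V}:\exists r>0,\ \forall v\in\mathcal{V},\ \|v_0-v\|\le r\Rightarrow f(u,v_0)\ge f(u,v)\}$ (so $R(u)\subseteq S(u)$). For finite $A\subseteq\mathcal{V}$: $\phi_A(u)=\max_{v\in A}f(u,v)$ and $R^\epsilon_A(u)=\{v\in A:\phi_A(u)-f(u,v)\le\epsilon\}$. For sets $X,Y$, $d_H(X,Y)=\max_{x\in X}\min_{y\in Y}\|x-y\|$. *)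

theory Defs
  imports "HOL-Analysis.Analysis"
begin

definition phi :: "('u \<Rightarrow> 'v \<Rightarrow> real) \<Rightarrow> 'v set \<Rightarrow> 'u \<Rightarrow> real" where
  "phi f V u = (SUP v\<in>V. f u v)"

definition Rset :: "('u \<Rightarrow> 'v \<Rightarrow> real) \<Rightarrow> 'v set \<Rightarrow> 'u \<Rightarrow> 'v set" where
  "Rset f V u = {v \<in> V. f u v = phi f V u}"

definition Sset :: "('u \<Rightarrow> 'v::real_normed_vector \<Rightarrow> real) \<Rightarrow> 'v set \<Rightarrow> 'u \<Rightarrow> 'v set" where
  "Sset f V u = {v0 \<in> V. \<exists>r>0. \<forall>v\<in>V. norm (v0 - v) \<le> r \<longrightarrow> f u v0 \<ge> f u v}"

definition phiA :: "('u \<Rightarrow> 'v \<Rightarrow> real) \<Rightarrow> 'v set \<Rightarrow> 'u \<Rightarrow> real" where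
  "phiA f A u = Max ((\<lambda>v. f u v) ` A)"

definition RepsA :: "('u \<Rightarrow> 'v \<Rightarrow> real) \<Rightarrow> real \<Rightarrow> 'v set \<Rightarrow> 'u \<Rightarrow> 'v set" where
  "RepsA f eps A u = {v \<in> A. phiA f A u - f u v \<le> eps}"

text \<open>Directed Hausdorff distance, max over X of min over Y, in ereal
  (the inf over an empty Y is +infinity, the sup over an empty X is -infinity).\<close>
definition dH :: "'v::metric_space set \<Rightarrow> 'v set \<Rightarrow> ereal" where
  "dH X Y = (SUP x\<in>X. INF y\<in>Y. ereal (dist x y))"

definition zeta :: "('u \<Rightarrow> 'v::real_normed_vector \<Rightarrow> real) \<Rightarrow> 'v set \<Rightarrow> 'u \<Rightarrow> ereal" where
  "zeta f V u = (if Sset f V u - Rset f V u = {} then \<infinity>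
      else ereal (phi f V u - Max ((\<lambda>v. f u v) ` (Sset f V u - Rset f V u))))"

end

theory Submission
  imports Defs
begin

text \<open>Let \<open>v'\<close> be \<open>\<epsilon>\<close>-optimal on \<open>A\<close>. The covering \<open>d\<^sub>H(A, S(u)) \<le> \<delta>\<close> puts a local maximum \<open>s\<close>
  within \<open>\<delta>\<close> of \<open>v'\<close>, and the covering \<open>d\<^sub>H(R(u), A) \<le> \<delta>\<close> puts a point of \<open>A\<close> within \<open>\<delta>\<close>
  of a global maximiser, so \<open>\<phi>\<^sub>A(u) \<ge> \<phi>(u) - l\<delta>\<close>. By the Lipschitz bound
  \<open>f(u,s) \<ge> \<phi>(u) - 2l\<delta> - \<epsilon> > \<phi>(u) - \<zeta>\<close>, so \<open>s\<close> cannot be a non-global local maximum: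
  \<open>s \<in> R(u)\<close>.\<close>

lemma dH_le_obtain_near:
  assumes "finite Y" "x \<in> X" "dH X Y \<le> ereal d"
  obtains y where "y \<in> Y" "dist x y \<le> d"
proof -
  have inf_le: "(INF y\<in>Y. ereal (dist x y)) \<le> ereal d"
    using SUP_upper[OF \<open>x \<in> X\<close>, of "\<lambda>x. INF y\<in>Y. ereal (dist x y)"] assms(3)
    unfolding dH_def by order
  have "Y \<noteq> {}"
    using inf_le by (auto simp: top_ereal_def)
  then have "(INF y\<in>Y. ereal (dist x y)) \<in> (\<lambda>y. ereal (dist x y)) ` Y"
    using \<open>finite Y\<close> by (simp add: cInf_eq_Min)
  then show ?thesis
    using inf_le that by auto
qed

lemma Rset_nonempty_obtain:
  assumes "compact V" "V \<noteq> {}" "continuous_on V (f u)"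
  obtains vm where "vm \<in> Rset f V u"
proof -
  obtain vm where vm: "vm \<in> V" "\<And>y. y \<in> V \<Longrightarrow> f u y \<le> f u vm"
    using continuous_attains_sup[OF assms] by blast
  have "bdd_above (f u ` V)"
    using vm by (intro bdd_aboveI2[where M = "f u vm"]) auto
  then have "phi f V u = f u vm"
    unfolding phi_def using vm by (intro antisym cSUP_least cSUP_upper) auto
  then show ?thesis
    using that vm(1) by (simp add: Rset_def)
qed

lemma lipschitz_on_lower_bound:
  assumes "l-lipschitz_on V g" "x \<in> V" "y \<in> V" "dist x y \<le> d" "l \<ge> 0"
  shows "g y \<ge> g x - l * d"
proof -
  have "\<bar>g x - g y\<bar> \<le> l * dist x y"
    using lipschitz_onD[OF assms(1-3)] by (simp add: dist_real_def)
  also have "\<dots> \<le> l * d"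
    using assms(4,5) by (rule mult_left_mono)
  finally show ?thesis by linarith
qed

lemma zeta_le_gap:
  assumes "finite (Sset f V u)" "s \<in> Sset f V u - Rset f V u"
  shows "zeta f V u \<le> ereal (phi f V u - f u s)"
proof -
  have "f u s \<le> Max ((\<lambda>v. f u v) ` (Sset f V u - Rset f V u))"
    using assms by (intro Max_ge) auto
  then show ?thesis
    using assms(2) by (auto simp: zeta_def)
qed

lemma RepsA_value_lower_bound:
  assumes "finite A" "A \<subseteq> V" "l-lipschitz_on V (f u)" "l \<ge> 0"
    and "vm \<in> Rset f V u" "dH (Rset f V u) A \<le> ereal delta"
    and "v' \<in> RepsA f eps A u"
  shows "f u v' \<ge> phi f V u - l * delta - eps"
proof -
  obtain a where a: "a \<in> A" "dist vm a \<le> delta"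
    using dH_le_obtain_near[OF \<open>finite A\<close> \<open>vm \<in> Rset f V u\<close> assms(6)] .
  have "vm \<in> V" "f u vm = phi f V u"
    using \<open>vm \<in> Rset f V u\<close> by (auto simp: Rset_def)
  then have "f u a \<ge> phi f V u - l * delta"
    using lipschitz_on_lower_bound[OF assms(3) _ _ a(2) \<open>l \<ge> 0\<close>] a(1) \<open>A \<subseteq> V\<close> by auto
  moreover have "phiA f A u \<ge> f u a"
    unfolding phiA_def using a(1) \<open>finite A\<close> by (intro Max_ge) auto
  ultimately show ?thesis
    using \<open>v' \<in> RepsA f eps A u\<close> by (auto simp: RepsA_def)
qed

theorem mainTheorem3:
  fixes f :: "'u \<Rightarrow> 'a::euclidean_space \<Rightarrow> real"
    and V :: "'a set" and U :: "'u set" and u :: 'u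
    and l eps delta :: real and A :: "'a set"
  assumes "compact V" and "V \<noteq> {}" and "u \<in> U"
    and "continuous_on V (f u)"
    and "l > 0" and "l-lipschitz_on V (f u)"
    and "finite (Rset f V u)" and "finite (Sset f V u)"
    and "eps \<ge> 0" and "ereal eps < zeta f V u"
    and "finite A" and "A \<subseteq> V"
    and "delta \<ge> 0"
    and "ereal delta < (zeta f V u - ereal eps) / ereal (2 * l)"
    and "dH (Rset f V u) A \<le> ereal delta"
    and "dH A (Sset f V u) \<le> ereal delta"
  shows "\<forall>v'\<in>RepsA f eps A u. \<exists>v\<in>Rset f V u. norm (v - v') \<le> delta"
proof
  fix v' assume v': "v' \<in> RepsA f eps A u"
  then have "v' \<in> A" by (simp add: RepsA_def)
  obtain s where s: "s \<in> Sset f V u" "dist v' s \<le> delta"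
    using dH_le_obtain_near[OF assms(8) \<open>v' \<in> A\<close> assms(16)] .
  obtain vm where "vm \<in> Rset f V u"
    using Rset_nonempty_obtain[of V f u] assms(1,2,4) by blast
  have "f u v' \<ge> phi f V u - l * delta - eps"
    using RepsA_value_lower_bound[OF assms(11,12,6) _ \<open>vm \<in> Rset f V u\<close> assms(15) v'] assms(5)
    by simp
  moreover have "f u s \<ge> f u v' - l * delta"
    using lipschitz_on_lower_bound[OF assms(6) _ _ s(2)] s(1) \<open>v' \<in> A\<close> assms(5,12)
    by (auto simp: Sset_def)
  ultimately have gap: "phi f V u - f u s \<le> 2 * l * delta + eps"
    by linarith
  have "s \<in> Rset f V u"
  proof (rule ccontr)
    assume "s \<notin> Rset f V u"
    then have "zeta f V u \<le> ereal (phi f V u - f u s)"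
      using zeta_le_gap[OF assms(8)] s(1) by blast
    then obtain z where "zeta f V u = ereal z" "z \<le> 2 * l * delta + eps"
      using gap assms(10) by (cases "zeta f V u") auto
    then show False
      using assms(5,14) by (simp add: field_simps)
  qed
  then show "\<exists>v\<in>Rset f V u. norm (v - v') \<le> delta"
    using s(2) by (metis dist_commute dist_norm)
qed

end
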